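(* Let $\mathcal{K}^{\langle\infty\rangle}$ be a planar unbounded simple nested fractal whose number of essential fixed points is $k=3$. Then $\mathcal{K}^{\langle\infty\rangle}$ has the good labelling property.
   Context: Setting: $L>1$, $N\ge2$, $\nu_1=0,\dots,\nu_N\in\mathbb{R}^2$, $\Psi_i(x)=x/L+\nu_i$, and $\mathcal{K}^{\langle 0\rangle}=\bigcup_i\Psi_i(\mathcal{K}^{\langle 0\rangle})$ is a planar simple nested fractal (essential fixed points $V_0^{\langle0\rangle}$: fixed points $x$ for which there are another fixed point $y$ and $\Psi_i\ne\Psi_j$ with $\Psi_i(x)=\Psi_j(y)$; open set condition, nesting, symmetry with respect to perpendicular bisectors of pairs of essential fixed points, connectivity); $k=\#V_0^{\langle0\rangle}$, and $V_0^{\langle0\rangle}$ spans a regular $k$-gon. $\mathcal{K}^{\langle M\rangle}=L^M\mathcal{K}^{\langle 0\rangle}$, $\mathcal{K}^{\langle\infty\rangle}=\bigcup_{M\ge0}\mathcal{K}^{\langle M\rangle}$. An $M$-complex is $\Delta_M=\mathcal{K}^{\langle M\rangle}+\nu_{\Delta_M}$ with $\nu_{\Delta_M}=\sum_{j=M+1}^{J}L^j\nu_{i_j}$ ($J\ge M+1$), vertex set $V(\Delta_M)=L^MV_0^{\langle0\rangle}+\nu_{\Delta_M}$; $V_M^{\langle M\rangle}=L^MV_0^{\langle0\rangle}$ and $V_M^{\langle\infty\rangle}$ is the union of all $V(\Delta_M)$. With $\mathcal{A}$ an alphabet of $k$ symbols and $\mathcal{R}_M$ the $k$ rotations about the barycenter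 of $\mathcal{K}^{\langle M\rangle}$ preserving $V_M^{\langle M\rangle}$, a good labelling function of order $M$ is $\ell_M:V_M^{\langle\infty\rangle}\to\mathcal{A}$, bijective on $V_M^{\langle M\rangle}$, such that for each $M$-complex $\Delta_M=\mathcal{K}^{\langle M\rangle}+\nu_{\Delta_M}$ there is $R_{\Delta_M}\in\mathcal{R}_M$ with $\ell_M(v)=\ell_M(R_{\Delta_M}(v-\nu_{\Delta_M}))$, $v\in V(\Delta_M)$. The good labelling property means that a good labelling function of some order $M\in\mathbb{Z}$ exists. *)

theory Defs
  imports "HOL-Analysis.Analysis"
begin

definition Psi :: "real \<Rightarrow> (nat \<Rightarrow> complex) \<Rightarrow> nat \<Rightarrow> complex \<Rightarrow> complex" where
  "Psi L \<nu> i x = x / complex_of_real L + \<nu> i"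

fun Psiw :: "real \<Rightarrow> (nat \<Rightarrow> complex) \<Rightarrow> nat list \<Rightarrow> complex \<Rightarrow> complex" where
  "Psiw L \<nu> [] = id"
| "Psiw L \<nu> (i # w) = Psi L \<nu> i \<circ> Psiw L \<nu> w"

definition words :: "nat \<Rightarrow> nat \<Rightarrow> nat list set" where
  "words N m = {w. length w = m \<and> set w \<subseteq> {1..N}}"

definition fixed_points :: "real \<Rightarrow> (nat \<Rightarrow> complex) \<Rightarrow> nat \<Rightarrow> complex set" where
  "fixed_points L \<nu> N = {x. \<exists>i\<in>{1..N}. Psi L \<nu> i x = x}"

definition essential_fixed_points :: "real \<Rightarrow> (nat \<Rightarrow> complex) \<Rightarrow> nat \<Rightarrow> complex set" where
  "essential_fixed_points L \<nu> N =
     {x \<in> fixed_points L \<nu> N. \<exists>y \<in> fixed_points L \<nu> N. \<exists>i\<in>{1..N}. \<exists>j\<in>{1..N}.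
        Psi L \<nu> i \<noteq> Psi L \<nu> j \<and> Psi L \<nu> i x = Psi L \<nu> j y}"

definition level_vertices :: "real \<Rightarrow> (nat \<Rightarrow> complex) \<Rightarrow> nat \<Rightarrow> nat \<Rightarrow> complex set" where
  "level_vertices L \<nu> N n =
     (\<Union>w\<in>words N n. Psiw L \<nu> w ` essential_fixed_points L \<nu> N)"

definition bisector_reflection :: "complex \<Rightarrow> complex \<Rightarrow> complex \<Rightarrow> complex" where
  "bisector_reflection x y z =
     z - (2 * ((z - (x + y) / 2) \<bullet> (y - x)) / ((y - x) \<bullet> (y - x))) *\<^sub>R (y - x)"

definition regular_polygon :: "complex set \<Rightarrow> nat \<Rightarrow> bool" where
  "regular_polygon V k \<longleftrightarrow>
     (\<exists>c r u. r > 0 \<and> norm u = 1 \<and>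
        V = {c + complex_of_real r * u * cis (2 * pi * real j / real k) | j. j < k})"

text \<open>Planar simple nested fractal (Lindstrom's axioms), including the standing
  assumption that V_0 spans a regular polygon.\<close>
definition planar_simple_nested_fractal ::
  "real \<Rightarrow> nat \<Rightarrow> (nat \<Rightarrow> complex) \<Rightarrow> complex set \<Rightarrow> bool" where
  "planar_simple_nested_fractal L N \<nu> K0 \<longleftrightarrow>
     L > 1 \<and> N \<ge> 2 \<and> \<nu> 1 = 0 \<and>
     \<comment> \<open>K0 is the (unique nonempty compact) attractor\<close>
     compact K0 \<and> K0 \<noteq> {} \<and> K0 = (\<Union>i\<in>{1..N}. Psi L \<nu> i ` K0) \<and>
     \<comment> \<open>at least two essential fixed points\<close>
     card (essential_fixed_points L \<nu> N) \<ge> 2 \<and>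
     \<comment> \<open>open set condition\<close>
     (\<exists>U. open U \<and> U \<noteq> {} \<and> (\<forall>i\<in>{1..N}. Psi L \<nu> i ` U \<subseteq> U) \<and>
        (\<forall>i\<in>{1..N}. \<forall>j\<in>{1..N}. i \<noteq> j \<longrightarrow> Psi L \<nu> i ` U \<inter> Psi L \<nu> j ` U = {})) \<and>
     \<comment> \<open>nesting\<close>
     (\<forall>n. \<forall>w\<in>words N n. \<forall>w'\<in>words N n. w \<noteq> w' \<longrightarrow>
        Psiw L \<nu> w ` K0 \<inter> Psiw L \<nu> w' ` K0 =
        Psiw L \<nu> w ` essential_fixed_points L \<nu> N \<inter> Psiw L \<nu> w' ` essential_fixed_points L \<nu> N) \<and>
     \<comment> \<open>symmetry\<close>
     (\<forall>x\<in>essential_fixed_points L \<nu> N. \<forall>y\<in>essential_fixed_points L \<nu> N. x \<noteq> y \<longrightarrow>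
        (\<forall>n. bisector_reflection x y ` level_vertices L \<nu> N n \<subseteq> level_vertices L \<nu> N n)) \<and>
     \<comment> \<open>connectivity of the graph of 1-cells\<close>
     (\<forall>i\<in>{1..N}. \<forall>j\<in>{1..N}.
        (\<lambda>a b. a \<in> {1..N} \<and> b \<in> {1..N} \<and>
           Psi L \<nu> a ` essential_fixed_points L \<nu> N \<inter> Psi L \<nu> b ` essential_fixed_points L \<nu> N \<noteq> {})\<^sup>*\<^sup>* i j) \<and>
     \<comment> \<open>V_0 spans a regular k-gon\<close>
     regular_polygon (essential_fixed_points L \<nu> N) (card (essential_fixed_points L \<nu> N))"

definition complex_shifts :: "real \<Rightarrow> nat \<Rightarrow> (nat \<Rightarrow> complex) \<Rightarrow> int \<Rightarrow> complex set" where
  "complex_shifts L N \<nu> M =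
     {t. \<exists>J::int. \<exists>idx::int \<Rightarrow> nat. J \<ge> M + 1 \<and> (\<forall>j\<in>{M+1..J}. idx j \<in> {1..N}) \<and>
         t = (\<Sum>j\<in>{M+1..J}. complex_of_real (L powi j) * \<nu> (idx j))}"

definition VMM :: "real \<Rightarrow> nat \<Rightarrow> (nat \<Rightarrow> complex) \<Rightarrow> int \<Rightarrow> complex set" where
  "VMM L N \<nu> M = (\<lambda>x. complex_of_real (L powi M) * x) ` essential_fixed_points L \<nu> N"

definition complex_vertices :: "real \<Rightarrow> nat \<Rightarrow> (nat \<Rightarrow> complex) \<Rightarrow> int \<Rightarrow> complex \<Rightarrow> complex set" where
  "complex_vertices L N \<nu> M t = (\<lambda>x. x + t) ` VMM L N \<nu> M"

definition VMinf :: "real \<Rightarrow> nat \<Rightarrow> (nat \<Rightarrow> complex) \<Rightarrow> int \<Rightarrow> complex set" where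
  "VMinf L N \<nu> M = (\<Union>t\<in>complex_shifts L N \<nu> M. complex_vertices L N \<nu> M t)"

text \<open>Barycenter of K^{<M>}, taken as the centroid of its vertex set V_M^{<M>}
  (which coincides with the barycenter of K^{<M>} by symmetry).\<close>
definition barycenter :: "real \<Rightarrow> nat \<Rightarrow> (nat \<Rightarrow> complex) \<Rightarrow> int \<Rightarrow> complex" where
  "barycenter L N \<nu> M = (\<Sum>v\<in>VMM L N \<nu> M. v) / of_nat (card (VMM L N \<nu> M))"

definition rotations_M :: "real \<Rightarrow> nat \<Rightarrow> (nat \<Rightarrow> complex) \<Rightarrow> int \<Rightarrow> (complex \<Rightarrow> complex) set" where
  "rotations_M L N \<nu> M =
     {R. \<exists>u. norm u = 1 \<and>
          R = (\<lambda>x. barycenter L N \<nu> M + u * (x - barycenter L N \<nu> M)) \<and>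
          R ` VMM L N \<nu> M = VMM L N \<nu> M}"

definition good_labelling_function ::
  "real \<Rightarrow> nat \<Rightarrow> (nat \<Rightarrow> complex) \<Rightarrow> int \<Rightarrow> 'a set \<Rightarrow> (complex \<Rightarrow> 'a) \<Rightarrow> bool" where
  "good_labelling_function L N \<nu> M A lab \<longleftrightarrow>
     lab ` VMinf L N \<nu> M \<subseteq> A \<and>
     bij_betw lab (VMM L N \<nu> M) A \<and>
     (\<forall>t\<in>complex_shifts L N \<nu> M. \<exists>R\<in>rotations_M L N \<nu> M.
        \<forall>v\<in>complex_vertices L N \<nu> M t. lab v = lab (R (v - t)))"

definition good_labelling_property :: "real \<Rightarrow> nat \<Rightarrow> (nat \<Rightarrow> complex) \<Rightarrow> bool" where
  "good_labelling_property L N \<nu> \<longleftrightarrow>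
     (\<exists>M::int. \<exists>A::nat set. \<exists>lab.
        card A = card (essential_fixed_points L \<nu> N) \<and>
        good_labelling_function L N \<nu> M A lab)"

end

theory Submission
  imports Defs
begin

text \<open>The similitudes \<open>\<Psi>\<^sub>i\<close> involve no rotation, so the vertex set of every
  M-complex is a translate of one equilateral triangle \<open>{c + a \<omega>\<^sup>j | j < 3}\<close>,
  where \<open>\<omega> = exp (2 \<pi> i / 3)\<close>. Cut the plane into strips of height \<open>Im \<omega>\<close> in the
  coordinate \<open>Im ((z - c) / a)\<close> and label each point by the index of its strip modulo 3.
  The vertices of any translate of the triangle lie at heights \<open>h\<close>, \<open>h + Im \<omega>\<close> and
  \<open>h - Im \<omega>\<close>, hence in three consecutive strips, and receive the labels \<open>s\<close>, \<open>s + 1\<close>,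
  \<open>s + 2\<close> modulo 3: the labelling of the triangle itself composed with the rotation by
  \<open>\<omega>\<^sup>s\<close>. So the strip labelling is a good labelling of order 0, wherever the complexes
  are placed.\<close>

definition omega :: complex where
  "omega = cis (2 * pi / 3)"

lemma omega_eq: "omega = Complex (-1/2) (sqrt 3 / 2)"
  by (simp add: omega_def complex_eq_iff cos_120 sin_120)

lemma omega_squared: "omega ^ 2 = Complex (-1/2) (- sqrt 3 / 2)"
  by (simp add: omega_eq power2_eq_square complex_eq_iff)

lemma omega_cubed: "omega ^ 3 = 1"
  by (simp add: omega_def Complex.DeMoivre)

lemma omega_power_mod: "omega ^ n = omega ^ (n mod 3)"
proof -
  have "omega ^ n = (omega ^ 3) ^ (n div 3) * omega ^ (n mod 3)"
    by (simp flip: power_mult power_add)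
  then show ?thesis
    by (simp add: omega_cubed)
qed

lemma norm_omega_power: "norm (omega ^ n) = 1"
  unfolding norm_power omega_def by simp

lemma sum_omega_powers: "(\<Sum>j<3. omega ^ j) = 0"
  by (simp add: numeral_3_eq_3 omega_eq complex_eq_iff)

lemma cis_third_turn: "cis (2 * pi * real j / 3) = omega ^ j"
  by (simp add: omega_def Complex.DeMoivre algebra_simps)

lemma Im_omega_pos: "Im omega > 0"
  by (simp add: omega_eq)

lemma Im_omega_power:
  obtains m :: int where "Im (omega ^ j) = of_int m * Im omega" "m mod 3 = int j mod 3"
proof -
  have j: "int j mod 3 = int (j mod 3)"
    by (simp add: zmod_int)
  have "j mod 3 < 3" by simp
  then consider "j mod 3 = 0" | "j mod 3 = 1" | "j mod 3 = 2" by linarith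
  then show ?thesis
  proof cases
    case 1
    then show ?thesis
      by (intro that[of 0]) (simp_all add: omega_power_mod[of j] j)
  next
    case 2
    then show ?thesis
      by (intro that[of 1]) (simp_all add: omega_power_mod[of j] j)
  next
    case 3
    have "Im (omega ^ j) = - Im omega"
      unfolding omega_power_mod[of j] 3 omega_squared by (simp add: omega_eq)
    with 3 show ?thesis
      by (intro that[of "-1"]) (simp_all add: j)
  qed
qed

lemma floor_Im_omega_power_mod:
  "\<lfloor>Im (omega ^ j + w) / Im omega\<rfloor> mod 3 = (\<lfloor>Im w / Im omega\<rfloor> + int j) mod 3"
proof -
  obtain m where m: "Im (omega ^ j) = of_int m * Im omega" "m mod 3 = int j mod 3"
    by (rule Im_omega_power)
  have "Im (omega ^ j + w) / Im omega = of_int m + Im w / Im omega"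
    using m(1) Im_omega_pos by (simp add: add_divide_distrib)
  then have "\<lfloor>Im (omega ^ j + w) / Im omega\<rfloor> = m + \<lfloor>Im w / Im omega\<rfloor>"
    by simp
  then show ?thesis
    using m(2) by (metis add.commute mod_add_left_eq)
qed

lemma inj_on_omega_power: "inj_on (\<lambda>j. omega ^ j) {..<3}"
  by (auto simp: inj_on_def lessThan_nat_numeral omega_eq power2_eq_square complex_eq_iff)

definition equilateral_triangle :: "complex \<Rightarrow> complex \<Rightarrow> complex set" where
  "equilateral_triangle c a = (\<lambda>j. c + a * omega ^ j) ` {..<3}"

lemma regular_polygon_3_equilateral_triangle:
  assumes "regular_polygon V 3"
  obtains c a where "a \<noteq> 0" "V = equilateral_triangle c a"
proof -
  from assms obtain c r u where "r > 0" "norm u = 1"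
    and V: "V = {c + complex_of_real r * u * cis (2 * pi * real j / real 3) | j. j < 3}"
    unfolding regular_polygon_def by blast
  then have "complex_of_real r * u \<noteq> 0"
    by auto
  moreover have "V = equilateral_triangle c (complex_of_real r * u)"
    unfolding V equilateral_triangle_def by (auto simp: cis_third_turn)
  ultimately show thesis
    using that by blast
qed

lemma inj_on_equilateral_triangle_vertex:
  "a \<noteq> 0 \<Longrightarrow> inj_on (\<lambda>j. c + a * omega ^ j) {..<3}"
  using inj_on_omega_power by (auto simp: inj_on_def)

lemma card_equilateral_triangle: "a \<noteq> 0 \<Longrightarrow> card (equilateral_triangle c a) = 3"
  unfolding equilateral_triangle_def by (simp add: card_image inj_on_equilateral_triangle_vertex)

lemma centroid_equilateral_triangle:
  assumes "a \<noteq> 0"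
  shows "(\<Sum>v\<in>equilateral_triangle c a. v) / of_nat (card (equilateral_triangle c a)) = c"
proof -
  have "(\<Sum>v\<in>equilateral_triangle c a. v) = (\<Sum>j<3. c + a * omega ^ j)"
    unfolding equilateral_triangle_def
    using assms by (simp add: sum.reindex inj_on_equilateral_triangle_vertex)
  also have "\<dots> = 3 * c + a * (\<Sum>j<3. omega ^ j)"
    by (simp add: sum.distrib sum_distrib_left)
  finally show ?thesis
    using assms by (simp add: sum_omega_powers card_equilateral_triangle)
qed

lemma rotate_equilateral_triangle:
  assumes "a \<noteq> 0"
  shows "(\<lambda>x. c + omega ^ k * (x - c)) ` equilateral_triangle c a = equilateral_triangle c a"
proof (rule endo_inj_surj)
  have rotate_vertex: "c + omega ^ k * (c + a * omega ^ j - c) = c + a * omega ^ ((j + k) mod 3)" for j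
    by (simp add: power_add flip: omega_power_mod)
  have "(\<lambda>x. c + omega ^ k * (x - c)) ` equilateral_triangle c a =
      (\<lambda>j. c + a * omega ^ j) ` (\<lambda>j. (j + k) mod 3) ` {..<3}"
    by (simp only: equilateral_triangle_def image_image rotate_vertex)
  also have "\<dots> \<subseteq> equilateral_triangle c a"
    unfolding equilateral_triangle_def by (intro image_mono) auto
  finally show "(\<lambda>x. c + omega ^ k * (x - c)) ` equilateral_triangle c a \<subseteq> equilateral_triangle c a" .
  show "inj_on (\<lambda>x. c + omega ^ k * (x - c)) (equilateral_triangle c a)"
    using norm_omega_power[of 1] by (auto simp: inj_on_def)
qed (simp add: equilateral_triangle_def)

definition stripe_label :: "complex \<Rightarrow> complex \<Rightarrow> complex \<Rightarrow> nat" where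
  "stripe_label c a z = nat (\<lfloor>Im ((z - c) / a) / Im omega\<rfloor> mod 3)"

lemma stripe_label_less_3: "stripe_label c a z < 3"
  unfolding stripe_label_def by linarith

lemma stripe_label_first_vertex: "a \<noteq> 0 \<Longrightarrow> stripe_label c a (c + a) = 0"
  by (simp add: stripe_label_def)

lemma stripe_label_translated_vertex:
  assumes "a \<noteq> 0"
  shows "stripe_label c a (c + a * omega ^ j + t) = (stripe_label c a (c + a + t) + j) mod 3"
proof -
  define s where "s = \<lfloor>Im (t / a) / Im omega\<rfloor>"
  have label: "stripe_label c a (c + a * omega ^ i + t) = nat ((s + int i) mod 3)" for i
  proof -
    have "(c + a * omega ^ i + t - c) / a = omega ^ i + t / a"
      using assms by (simp add: field_simps)
    then show ?thesis
      unfolding stripe_label_def s_def by (simp only: floor_Im_omega_power_mod)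
  qed
  have "int ((stripe_label c a (c + a + t) + j) mod 3) = (s mod 3 + int j) mod 3"
    using label[of 0] by (simp add: zmod_int)
  also have "\<dots> = (s + int j) mod 3"
    by (simp add: mod_add_left_eq)
  finally show ?thesis
    by (simp add: label)
qed

lemma stripe_label_vertex: "a \<noteq> 0 \<Longrightarrow> stripe_label c a (c + a * omega ^ j) = j mod 3"
  using stripe_label_translated_vertex[of a c j 0] by (simp add: stripe_label_first_vertex)

lemma bij_betw_stripe_label:
  assumes "a \<noteq> 0"
  shows "bij_betw (stripe_label c a) (equilateral_triangle c a) {..<3}"
proof (rule bij_betw_byWitness[where f' = "\<lambda>j. c + a * omega ^ j"])
  show "\<forall>v\<in>equilateral_triangle c a. c + a * omega ^ stripe_label c a v = v"
    using assms by (auto simp: equilateral_triangle_def stripe_label_vertex)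
  show "\<forall>j\<in>{..<3}. stripe_label c a (c + a * omega ^ j) = j"
    using assms by (simp add: stripe_label_vertex)
  show "stripe_label c a ` equilateral_triangle c a \<subseteq> {..<3}"
    using stripe_label_less_3 by auto
  show "(\<lambda>j. c + a * omega ^ j) ` {..<3} \<subseteq> equilateral_triangle c a"
    by (simp add: equilateral_triangle_def)
qed

lemma rotation_in_rotations_M:
  assumes "VMM L N \<nu> M = equilateral_triangle c a" and "a \<noteq> 0"
  shows "(\<lambda>x. c + omega ^ k * (x - c)) \<in> rotations_M L N \<nu> M"
proof -
  have "barycenter L N \<nu> M = c"
    unfolding barycenter_def assms(1) using assms(2) by (rule centroid_equilateral_triangle)
  then show ?thesis
    unfolding rotations_M_def assms(1)
    using rotate_equilateral_triangle[OF assms(2)] norm_omega_power by blast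
qed

lemma good_labelling_function_stripe_label:
  assumes "VMM L N \<nu> M = equilateral_triangle c a" and "a \<noteq> 0"
  shows "good_labelling_function L N \<nu> M {..<3} (stripe_label c a)"
  unfolding good_labelling_function_def
proof (intro conjI ballI)
  show "stripe_label c a ` VMinf L N \<nu> M \<subseteq> {..<3}"
    using stripe_label_less_3 by auto
  show "bij_betw (stripe_label c a) (VMM L N \<nu> M) {..<3}"
    unfolding assms(1) using assms(2) by (rule bij_betw_stripe_label)
  fix t
  define k where "k = stripe_label c a (c + a + t)"
  let ?R = "\<lambda>x. c + omega ^ k * (x - c)"
  show "\<exists>R\<in>rotations_M L N \<nu> M. \<forall>v\<in>complex_vertices L N \<nu> M t. stripe_label c a v = stripe_label c a (R (v - t))"
  proof (rule bexI[of _ ?R])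
    show "?R \<in> rotations_M L N \<nu> M"
      using assms by (rule rotation_in_rotations_M)
    have "stripe_label c a (c + a * omega ^ j + t) = stripe_label c a (?R (c + a * omega ^ j))" for j
    proof -
      have "stripe_label c a (c + a * omega ^ j + t) = (j + k) mod 3"
        unfolding stripe_label_translated_vertex[OF assms(2)] k_def by (simp add: add.commute)
      also have "\<dots> = stripe_label c a (c + a * omega ^ (j + k))"
        using assms(2) by (simp add: stripe_label_vertex)
      also have "c + a * omega ^ (j + k) = ?R (c + a * omega ^ j)"
        by (simp add: power_add)
      finally show ?thesis .
    qed
    then show "\<forall>v\<in>complex_vertices L N \<nu> M t. stripe_label c a v = stripe_label c a (?R (v - t))"
      unfolding complex_vertices_def assms(1) equilateral_triangle_def by auto
  qed
qed

theorem theorem3p11: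
  fixes L :: real and N :: nat and \<nu> :: "nat \<Rightarrow> complex" and K0 :: "complex set"
  assumes "planar_simple_nested_fractal L N \<nu> K0"
    and "card (essential_fixed_points L \<nu> N) = 3"
  shows "good_labelling_property L N \<nu>"
proof -
  have "regular_polygon (essential_fixed_points L \<nu> N) 3"
    using assms unfolding planar_simple_nested_fractal_def by simp
  then obtain c a where "a \<noteq> 0" and "essential_fixed_points L \<nu> N = equilateral_triangle c a"
    by (rule regular_polygon_3_equilateral_triangle)
  then have "good_labelling_function L N \<nu> 0 {..<3} (stripe_label c a)"
    by (intro good_labelling_function_stripe_label) (simp_all add: VMM_def)
  then show ?thesis
    unfolding good_labelling_property_def using assms(2) by force
qed

end
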